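(* Let $c$ be a non-constant clause on the variables $x_1,\dots,x_n$, and let $a\in[-1,1]^n$. If $\mathrm{FE}_c(a)=-1$, then $a$ is a feasible solution of $\mathrm{FE}_c$.
   Context: Boolean values are encoded as $\pm1$, with $-1$ standing for True. A clause is a CNF, cardinality, XOR or NAE constraint, regarded as a function $\{\pm1\}^n\to\{\pm1\}$ with value $-1$ exactly when it is satisfied. A clause is non-constant if it is equivalent neither to True nor to False. $\mathrm{FE}_c$ is the Fourier expansion of $c$, i.e. the unique multilinear polynomial agreeing with $c$ on $\{\pm1\}^n$. For a multilinear polynomial $F$ on $[-1,1]^n$, a set $J\subseteq[n]$ and a vector $z$, $F_{J\gets z}$ denotes the polynomial obtained by fixing the coordinates in $J$ to the values $z$. Feasibility: for $a\in[-1,1]^n$, let $I=\{i: a_i\in\{\pm1\}\}$ and let $a_I$ be the restriction of $a$ to the coordinates in $I$. Then $a$ is a feasible solution of $F$ if $F_{I\gets a_I}$ is a constant polynomial. *)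

theory Defs
  imports Complex_Main
begin

text \<open>Booleans are encoded as +1/-1, with -1 meaning True. Variables are indexed 0..n-1.
  A literal is a pair (i, neg): variable x_i, negated iff neg.\<close>

type_synonym lit = "nat \<times> bool"

datatype clause =
    CNF "lit list"
  | Card "lit list" nat
  | XOR "lit list"
  | NAE "lit list"

fun lits :: "clause \<Rightarrow> lit list" where
  "lits (CNF ls) = ls"
| "lits (Card ls k) = ls"
| "lits (XOR ls) = ls"
| "lits (NAE ls) = ls"

definition lit_true :: "(nat \<Rightarrow> real) \<Rightarrow> lit \<Rightarrow> bool" where
  "lit_true x l = (if snd l then x (fst l) = 1 else x (fst l) = -1)"

fun satisfied :: "clause \<Rightarrow> (nat \<Rightarrow> real) \<Rightarrow> bool" where
  "satisfied (CNF ls) x = (\<exists>l\<in>set ls. lit_true x l)"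
| "satisfied (Card ls k) x = (k \<le> length (filter (lit_true x) ls))"
| "satisfied (XOR ls) x = odd (length (filter (lit_true x) ls))"
| "satisfied (NAE ls) x = ((\<exists>l\<in>set ls. lit_true x l) \<and> (\<exists>l\<in>set ls. \<not> lit_true x l))"

definition clause_val :: "clause \<Rightarrow> (nat \<Rightarrow> real) \<Rightarrow> real" where
  "clause_val c x = (if satisfied c x then -1 else 1)"

definition wf_clause :: "nat \<Rightarrow> clause \<Rightarrow> bool" where
  "wf_clause n c = (distinct (map fst (lits c)) \<and> (\<forall>l\<in>set (lits c). fst l < n))"

definition bool_pt :: "nat set \<Rightarrow> nat \<Rightarrow> real" where
  "bool_pt S i = (if i \<in> S then -1 else 1)"

definition bool_cube :: "nat \<Rightarrow> (nat \<Rightarrow> real) set" where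
  "bool_cube n = bool_pt ` Pow {..<n}"

definition nonconstant :: "nat \<Rightarrow> clause \<Rightarrow> bool" where
  "nonconstant n c = (\<exists>x\<in>bool_cube n. \<exists>y\<in>bool_cube n. clause_val c x \<noteq> clause_val c y)"

text \<open>Multilinear polynomials in x_0..x_{n-1}: coefficient function on monomials (sets of variables).\<close>
type_synonym mlpoly = "nat set \<Rightarrow> real"

definition monom :: "nat set \<Rightarrow> (nat \<Rightarrow> real) \<Rightarrow> real" where
  "monom T x = (\<Prod>i\<in>T. x i)"

definition FE :: "nat \<Rightarrow> clause \<Rightarrow> mlpoly" where
  "FE n c T = (if T \<subseteq> {..<n}
      then (\<Sum>S\<in>Pow {..<n}. clause_val c (bool_pt S) * monom T (bool_pt S)) / 2 ^ n
      else 0)"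

definition ml_eval :: "nat \<Rightarrow> mlpoly \<Rightarrow> (nat \<Rightarrow> real) \<Rightarrow> real" where
  "ml_eval n p a = (\<Sum>T\<in>Pow {..<n}. p T * monom T a)"

text \<open>F_{J <- z}: fix the variables in J to the values z; result is a multilinear
  polynomial in the remaining variables.\<close>
definition fix_vars :: "nat \<Rightarrow> mlpoly \<Rightarrow> nat set \<Rightarrow> (nat \<Rightarrow> real) \<Rightarrow> mlpoly" where
  "fix_vars n p J z T = (if T \<subseteq> {..<n} - J
      then (\<Sum>S\<in>{S\<in>Pow {..<n}. S - J = T}. p S * monom (S \<inter> J) z)
      else 0)"

definition const_poly :: "mlpoly \<Rightarrow> bool" where
  "const_poly p = (\<forall>T. T \<noteq> {} \<longrightarrow> p T = 0)"

definition feasible :: "nat \<Rightarrow> mlpoly \<Rightarrow> (nat \<Rightarrow> real) \<Rightarrow> bool" where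
  "feasible n p a = const_poly (fix_vars n p {i. i < n \<and> (a i = 1 \<or> a i = -1)} a)"

end

theory Submission
  imports Defs
begin

text \<open>Writing \<open>w\<^sub>a(S) = \<Prod>\<^sub>i (1 + x\<^sub>i(S) a\<^sub>i)\<close> for the Boolean point \<open>x(S)\<close>, the value of the
  Fourier expansion of \<open>f\<close> at \<open>a \<in> [-1,1]\<^sup>n\<close> is the average of \<open>f\<close> under the probability
  weights \<open>w\<^sub>a(S) / 2\<^sup>n\<close>, i.e. under the product distribution with means \<open>a\<close>. If this average
  equals the minimum value \<open>-1\<close>, then \<open>f = -1\<close> on the support of the distribution, which is the
  subcube on which the coordinates \<open>i\<close> with \<open>a\<^sub>i = \<plusminus>1\<close> take the value \<open>a\<^sub>i\<close>. Fixing these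
  coordinates therefore turns \<open>f\<close> into the constant \<open>-1\<close>, so every non-constant coefficient of
  the restricted polynomial vanishes.\<close>

definition fourier_expansion :: "nat \<Rightarrow> ((nat \<Rightarrow> real) \<Rightarrow> real) \<Rightarrow> mlpoly" where
  "fourier_expansion n f T = (if T \<subseteq> {..<n}
      then (\<Sum>S\<in>Pow {..<n}. f (bool_pt S) * monom T (bool_pt S)) / 2 ^ n
      else 0)"

lemma FE_eq_fourier_expansion: "FE n c = fourier_expansion n (clause_val c)"
  by (simp add: fun_eq_iff FE_def fourier_expansion_def)

definition bias_weight :: "nat set \<Rightarrow> (nat \<Rightarrow> real) \<Rightarrow> nat set \<Rightarrow> real" where
  "bias_weight J z S = (\<Prod>i\<in>J. 1 + bool_pt S i * z i)"

lemma sum_Pow_prod: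
  fixes y :: "'a \<Rightarrow> 'b::comm_semiring_1"
  assumes "finite A"
  shows "(\<Sum>U\<in>Pow A. \<Prod>i\<in>U. y i) = (\<Prod>i\<in>A. 1 + y i)"
  using prod_add[OF assms, of y "\<lambda>_. 1"] by (simp add: add.commute)

lemma sum_Pow_prod_bool_pt:
  fixes g :: "nat \<Rightarrow> real \<Rightarrow> 'a::comm_semiring_1"
  assumes "finite A"
  shows "(\<Sum>S\<in>Pow A. \<Prod>i\<in>A. g i (bool_pt S i)) = (\<Prod>i\<in>A. g i (-1) + g i 1)"
proof -
  have "(\<Prod>i\<in>A. g i (bool_pt S i)) = (\<Prod>i\<in>S. g i (-1)) * (\<Prod>i\<in>A - S. g i 1)"
    if "S \<subseteq> A" for S
  proof -
    have "(\<Prod>i\<in>A. g i (bool_pt S i)) = (\<Prod>i\<in>A. if i \<in> S then g i (-1) else g i 1)"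
      by (simp add: bool_pt_def if_distrib)
    also have "\<dots> = (\<Prod>i\<in>A \<inter> S. g i (-1)) * (\<Prod>i\<in>A - S. g i 1)"
      using prod.If_cases[OF assms, of "\<lambda>i. i \<in> S"] by (simp add: Diff_eq)
    finally show ?thesis using that by (simp add: Int_absorb1)
  qed
  then show ?thesis
    by (simp add: prod_add[OF assms])
qed

lemma monom_union:
  assumes "finite T" "finite U" "T \<inter> U = {}"
  shows "monom (T \<union> U) x = monom T x * monom U x"
  unfolding monom_def using assms by (rule prod.union_disjoint)

lemma ml_eval_eq_fix_vars: "ml_eval n p a = fix_vars n p {..<n} a {}"
proof -
  have "{S \<in> Pow {..<n}. S - {..<n} = {}} = Pow {..<n}"
    by auto
  then show ?thesis
    unfolding ml_eval_def fix_vars_def by (auto intro: sum.cong simp: Int_absorb2)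
qed

lemma fix_vars_eq_sum_Pow:
  assumes "J \<subseteq> {..<n}" "T \<subseteq> {..<n} - J"
  shows "fix_vars n p J z T = (\<Sum>U\<in>Pow J. p (T \<union> U) * monom U z)"
proof -
  have "{S \<in> Pow {..<n}. S - J = T} = (\<lambda>U. T \<union> U) ` Pow J"
  proof (intro equalityI subsetI)
    fix S assume "S \<in> {S \<in> Pow {..<n}. S - J = T}"
    then have "S = T \<union> (S \<inter> J)" by auto
    then show "S \<in> (\<lambda>U. T \<union> U) ` Pow J" by blast
  qed (use assms in auto)
  moreover have "inj_on (\<lambda>U. T \<union> U) (Pow J)"
    using assms(2) by (auto simp: inj_on_def)
  moreover have "(T \<union> U) \<inter> J = U" if "U \<subseteq> J" for U
    using assms(2) that by auto
  ultimately show ?thesis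
    using assms(2) by (simp add: fix_vars_def sum.reindex)
qed

lemma fix_vars_fourier_expansion:
  assumes J: "J \<subseteq> {..<n}" and T: "T \<subseteq> {..<n} - J"
  shows "fix_vars n (fourier_expansion n f) J z T
    = (\<Sum>S\<in>Pow {..<n}. f (bool_pt S) * monom T (bool_pt S) * bias_weight J z S) / 2 ^ n"
proof -
  have finite: "finite J" "finite T"
    using J T by (auto intro: finite_subset[of _ "{..<n}"])
  have coeff: "fourier_expansion n f (T \<union> U)
      = (\<Sum>S\<in>Pow {..<n}. f (bool_pt S) * monom T (bool_pt S) * monom U (bool_pt S)) / 2 ^ n"
    if "U \<subseteq> J" for U
  proof -
    have "T \<inter> U = {}" "finite U" "T \<union> U \<subseteq> {..<n}"
      using J T that finite(1) finite_subset by auto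
    then show ?thesis
      using finite(2) by (simp add: fourier_expansion_def monom_union mult.assoc)
  qed
  have "fix_vars n (fourier_expansion n f) J z T
      = (\<Sum>U\<in>Pow J. \<Sum>S\<in>Pow {..<n}.
           f (bool_pt S) * monom T (bool_pt S) * (monom U (bool_pt S) * monom U z)) / 2 ^ n"
    using J T by (simp add: fix_vars_eq_sum_Pow coeff sum_divide_distrib sum_distrib_left mult_ac)
  also have "\<dots> = (\<Sum>S\<in>Pow {..<n}. f (bool_pt S) * monom T (bool_pt S)
                     * (\<Sum>U\<in>Pow J. \<Prod>i\<in>U. bool_pt S i * z i)) / 2 ^ n"
    by (subst sum.swap) (simp add: sum_distrib_left monom_def prod.distrib)
  also have "\<dots> = (\<Sum>S\<in>Pow {..<n}. f (bool_pt S) * monom T (bool_pt S) * bias_weight J z S) / 2 ^ n"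
    by (simp add: sum_Pow_prod[OF finite(1)] bias_weight_def)
  finally show ?thesis .
qed

lemma sum_monom_bias_weight:
  assumes "finite N" "T \<subseteq> N" "J \<subseteq> N" "T \<inter> J = {}"
  shows "(\<Sum>S\<in>Pow N. monom T (bool_pt S) * bias_weight J z S) = (if T = {} then 2 ^ card N else 0)"
proof -
  define g where "g i s = (if i \<in> T then s else 1) * (if i \<in> J then 1 + s * z i else 1)" for i s
  have "monom T (bool_pt S) * bias_weight J z S = (\<Prod>i\<in>N. g i (bool_pt S i))" for S
    using assms(1-3)
    by (simp add: g_def monom_def bias_weight_def prod.distrib prod.If_cases Int_absorb1)
  then have "(\<Sum>S\<in>Pow N. monom T (bool_pt S) * bias_weight J z S) = (\<Prod>i\<in>N. g i (-1) + g i 1)"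
    by (simp add: sum_Pow_prod_bool_pt[OF assms(1)])
  also have "\<dots> = (\<Prod>i\<in>N. if i \<in> T then 0 else 2)"
    using assms(4) by (intro prod.cong) (auto simp: g_def)
  also have "\<dots> = (if T = {} then 2 ^ card N else 0)"
    using assms(1,2) by (auto simp: prod_zero_iff)
  finally show ?thesis .
qed

lemma bias_weight_nonneg:
  assumes "\<forall>i\<in>J. \<bar>z i\<bar> \<le> 1"
  shows "0 \<le> bias_weight J z S"
  unfolding bias_weight_def using assms by (intro prod_nonneg) (auto simp: bool_pt_def)

lemma bias_weight_neq_0:
  assumes "finite J" "\<forall>i\<in>J. \<bar>z i\<bar> \<noteq> 1"
  shows "bias_weight J z S \<noteq> 0"
  unfolding bias_weight_def using assms by (auto simp: bool_pt_def prod_zero_iff split: if_splits)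

lemma bias_weight_subset:
  assumes "finite N" "J \<subseteq> N"
  shows "bias_weight N z S = bias_weight J z S * bias_weight (N - J) z S"
  unfolding bias_weight_def using prod.subset_diff[OF assms(2,1)] by (simp add: mult.commute)

lemma weighted_sum_eq_lower_bound_imp:
  fixes f w :: "'a \<Rightarrow> 'b::linordered_idom"
  assumes "finite A" "\<forall>x\<in>A. m \<le> f x" "\<forall>x\<in>A. 0 \<le> w x"
    and "(\<Sum>x\<in>A. f x * w x) = m * (\<Sum>x\<in>A. w x)"
    and "x \<in> A"
  shows "f x * w x = m * w x"
proof -
  have "(\<Sum>x\<in>A. (f x - m) * w x) = 0"
    using assms(4) by (simp add: left_diff_distrib sum_subtractf sum_distrib_left)
  moreover have "\<forall>x\<in>A. 0 \<le> (f x - m) * w x"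
    using assms(2,3) by simp
  ultimately have "(f x - m) * w x = 0"
    using assms(1,5) by (simp add: sum_nonneg_eq_0_iff)
  then show ?thesis by (simp add: left_diff_distrib)
qed

lemma fourier_eval_eq_minus_one_on_support:
  assumes f_ge: "\<forall>S\<subseteq>{..<n}. -1 \<le> f (bool_pt S)"
    and a: "\<forall>i<n. \<bar>a i\<bar> \<le> 1"
    and eval: "ml_eval n (fourier_expansion n f) a = -1"
    and J: "J = {i. i < n \<and> (a i = 1 \<or> a i = -1)}"
    and S: "S \<subseteq> {..<n}"
  shows "f (bool_pt S) * bias_weight J a S = - bias_weight J a S"
proof -
  have mean: "(\<Sum>S\<in>Pow {..<n}. f (bool_pt S) * bias_weight {..<n} a S)
      = -1 * (\<Sum>S\<in>Pow {..<n}. bias_weight {..<n} a S)"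
    using eval fix_vars_fourier_expansion[of "{..<n}" n "{}" f a]
      sum_monom_bias_weight[of "{..<n}" "{}" "{..<n}" a]
    by (simp add: ml_eval_eq_fix_vars monom_def divide_eq_eq)
  have "f (bool_pt S) * bias_weight {..<n} a S = -1 * bias_weight {..<n} a S"
    by (rule weighted_sum_eq_lower_bound_imp[OF _ _ _ mean])
      (use f_ge a S in \<open>auto intro: bias_weight_nonneg\<close>)
  then have "f (bool_pt S) * bias_weight J a S * bias_weight ({..<n} - J) a S
      = - bias_weight J a S * bias_weight ({..<n} - J) a S"
    using J by (simp add: bias_weight_subset[of "{..<n}" J] subset_eq mult.assoc)
  moreover have "bias_weight ({..<n} - J) a S \<noteq> 0"
    using a J by (intro bias_weight_neq_0) (auto simp: abs_if)
  ultimately show ?thesis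
    by (metis minus_mult_left mult_cancel_right)
qed

lemma feasible_fourier_expansion_if_eval_eq_minus_one:
  assumes f_ge: "\<forall>S\<subseteq>{..<n}. -1 \<le> f (bool_pt S)"
    and a: "\<forall>i<n. \<bar>a i\<bar> \<le> 1"
    and eval: "ml_eval n (fourier_expansion n f) a = -1"
  shows "feasible n (fourier_expansion n f) a"
  unfolding feasible_def const_poly_def
proof (intro allI impI)
  define J where "J = {i. i < n \<and> (a i = 1 \<or> a i = -1)}"
  fix T :: "nat set"
  assume "T \<noteq> {}"
  have J: "J \<subseteq> {..<n}"
    by (auto simp: J_def)
  have "fix_vars n (fourier_expansion n f) J a T = 0"
  proof (cases "T \<subseteq> {..<n} - J")
    case False
    then show ?thesis by (simp add: fix_vars_def)
  next
    case True
    have "fix_vars n (fourier_expansion n f) J a T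
        = (\<Sum>S\<in>Pow {..<n}. monom T (bool_pt S) * (f (bool_pt S) * bias_weight J a S)) / 2 ^ n"
      using J True by (simp add: fix_vars_fourier_expansion mult_ac)
    also have "\<dots> = - (\<Sum>S\<in>Pow {..<n}. monom T (bool_pt S) * bias_weight J a S) / 2 ^ n"
      using fourier_eval_eq_minus_one_on_support[OF f_ge a eval J_def] by (simp add: sum_negf)
    also have "\<dots> = 0"
      using J True \<open>T \<noteq> {}\<close> by (subst sum_monom_bias_weight) auto
    finally show ?thesis .
  qed
  then show "fix_vars n (fourier_expansion n f) {i. i < n \<and> (a i = 1 \<or> a i = -1)} a T = 0"
    by (simp add: J_def)
qed

theorem lemma4:
  fixes n :: nat and c :: clause and a :: "nat \<Rightarrow> real"
  assumes "wf_clause n c"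
    and "nonconstant n c"
    and "\<forall>i<n. -1 \<le> a i \<and> a i \<le> 1"
    and "ml_eval n (FE n c) a = -1"
  shows "feasible n (FE n c) a"
proof -
  have "\<forall>S\<subseteq>{..<n}. -1 \<le> clause_val c (bool_pt S)"
    by (simp add: clause_val_def)
  moreover have "\<forall>i<n. \<bar>a i\<bar> \<le> 1"
    using assms(3) by auto
  ultimately show ?thesis
    using assms(4) feasible_fourier_expansion_if_eval_eq_minus_one
    unfolding FE_eq_fourier_expansion by blast
qed

end
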